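(* Let $X\subset\mathbb{R}$, $\delta>0$, and let $f,g:X\to\mathbb{R}^+$. Suppose the graph of $g$ intersects $N_\delta(g)$ boxes of the $\delta$-mesh, and that for every column $\mathbf{B}_i$ the graph of $f$ intersects at most $n_f$ boxes of $\mathbf{B}_i$. Then the graph of $f+g$ intersects at least $\frac{N_\delta(g)}{2n_f}$ boxes of the $\delta$-mesh.
   Context: The $\delta$-mesh consists of the disjoint boxes $B_i^j=[i\delta,(i+1)\delta)\times[j\delta,(j+1)\delta)$, $i,j\in\mathbb{Z}$; the $i$-th column is $\mathbf{B}_i=\bigcup_j B_i^j$. The graph of $h$ is $\{(x,h(x)):x\in X\}$, and $N_\delta(h)$ denotes the number of boxes of the $\delta$-mesh meeting the graph of $h$. *)

theory Defs
  imports Complex_Main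
begin

definition mesh_box :: "real \<Rightarrow> int \<Rightarrow> int \<Rightarrow> (real \<times> real) set" where
  "mesh_box \<delta> i j = {real_of_int i * \<delta> ..< (real_of_int i + 1) * \<delta>} \<times>
                      {real_of_int j * \<delta> ..< (real_of_int j + 1) * \<delta>}"

definition graph_on :: "real set \<Rightarrow> (real \<Rightarrow> real) \<Rightarrow> (real \<times> real) set" where
  "graph_on X h = {(x, h x) | x. x \<in> X}"

definition meeting_boxes :: "real \<Rightarrow> real set \<Rightarrow> (real \<Rightarrow> real) \<Rightarrow> (int \<times> int) set" where
  "meeting_boxes \<delta> X h = {(i, j). mesh_box \<delta> i j \<inter> graph_on X h \<noteq> {}}"

definition N_delta :: "real \<Rightarrow> real set \<Rightarrow> (real \<Rightarrow> real) \<Rightarrow> nat" where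
  "N_delta \<delta> X h = card (meeting_boxes \<delta> X h)"

definition column_meeting :: "real \<Rightarrow> real set \<Rightarrow> (real \<Rightarrow> real) \<Rightarrow> int \<Rightarrow> int set" where
  "column_meeting \<delta> X h i = {j. mesh_box \<delta> i j \<inter> graph_on X h \<noteq> {}}"

end

theory Submission
  imports Defs
begin

text \<open>Over a point \<open>x\<close> of the \<open>i\<close>-th column, \<open>\<lfloor>(f x + g x)/\<delta>\<rfloor> = \<lfloor>f x/\<delta>\<rfloor> + \<lfloor>g x/\<delta>\<rfloor> + e\<close> with
  \<open>e \<in> {0, 1}\<close>, and \<open>\<lfloor>f x/\<delta>\<rfloor>\<close> is one of the at most \<open>n\<^sub>f\<close> rows met by \<open>f\<close> in that column.
  So the rows of the boxes of \<open>f + g\<close> and of \<open>g\<close> over the same point differ by one of at most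
  \<open>2 n\<^sub>f\<close> values depending only on the column: each box met by \<open>f + g\<close> is within this shift of
  at most \<open>2 n\<^sub>f\<close> boxes met by \<open>g\<close>, giving \<open>N\<^sub>\<delta>(g) \<le> 2 n\<^sub>f N\<^sub>\<delta>(f + g)\<close>. The same argument in
  the other direction shows that \<open>f + g\<close> meets only finitely many boxes, which is needed because
  \<open>card\<close> of an infinite set is \<open>0\<close>.\<close>

lemma mesh_box_iff_floor:
  assumes "\<delta> > 0"
  shows "(x, y) \<in> mesh_box \<delta> i j \<longleftrightarrow> i = \<lfloor>x / \<delta>\<rfloor> \<and> j = \<lfloor>y / \<delta>\<rfloor>"
proof -
  have interval_iff: "real_of_int k * \<delta> \<le> t \<and> t < (real_of_int k + 1) * \<delta> \<longleftrightarrow> k = \<lfloor>t / \<delta>\<rfloor>"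
    for t k
  proof -
    have "real_of_int k * \<delta> \<le> t \<and> t < (real_of_int k + 1) * \<delta> \<longleftrightarrow>
        real_of_int k \<le> t / \<delta> \<and> t / \<delta> < real_of_int k + 1"
      using assms by (simp add: pos_le_divide_eq pos_divide_less_eq)
    then show ?thesis by (metis floor_eq_iff)
  qed
  show ?thesis
    unfolding mesh_box_def using interval_iff[of i x] interval_iff[of j y] by auto
qed

lemma meeting_boxes_eq_image:
  assumes "\<delta> > 0"
  shows "meeting_boxes \<delta> X h = (\<lambda>x. (\<lfloor>x / \<delta>\<rfloor>, \<lfloor>h x / \<delta>\<rfloor>)) ` X"
proof -
  have "(i, j) \<in> meeting_boxes \<delta> X h \<longleftrightarrow> (\<exists>x\<in>X. (i, j) = (\<lfloor>x / \<delta>\<rfloor>, \<lfloor>h x / \<delta>\<rfloor>))" for i j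
    unfolding meeting_boxes_def graph_on_def using mesh_box_iff_floor[OF assms] by blast
  then show ?thesis by (auto simp: image_iff)
qed

lemma column_meeting_eq_image:
  assumes "\<delta> > 0"
  shows "column_meeting \<delta> X h i = (\<lambda>x. \<lfloor>h x / \<delta>\<rfloor>) ` {x \<in> X. \<lfloor>x / \<delta>\<rfloor> = i}"
proof -
  have "j \<in> column_meeting \<delta> X h i \<longleftrightarrow> (\<exists>x\<in>X. i = \<lfloor>x / \<delta>\<rfloor> \<and> j = \<lfloor>h x / \<delta>\<rfloor>)" for j
    unfolding column_meeting_def graph_on_def using mesh_box_iff_floor[OF assms] by blast
  then show ?thesis by (auto simp: image_iff)
qed

lemma floor_add_divide:
  "\<lfloor>(a + b) / \<delta>\<rfloor> = \<lfloor>a / \<delta>\<rfloor> + \<lfloor>b / \<delta>\<rfloor> \<or> \<lfloor>(a + b) / \<delta>\<rfloor> = \<lfloor>a / \<delta>\<rfloor> + \<lfloor>b / \<delta>\<rfloor> + 1"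
  by (simp add: add_divide_distrib floor_add)

lemma meeting_boxes_subset_shifts:
  assumes "\<delta> > 0" and "\<And>x. x \<in> X \<Longrightarrow> \<lfloor>u x / \<delta>\<rfloor> - \<lfloor>v x / \<delta>\<rfloor> \<in> D \<lfloor>x / \<delta>\<rfloor>"
  shows "meeting_boxes \<delta> X u \<subseteq> (\<Union>(i, j) \<in> meeting_boxes \<delta> X v. (\<lambda>d. (i, j + d)) ` D i)"
proof
  fix p assume "p \<in> meeting_boxes \<delta> X u"
  then obtain x where x: "x \<in> X" and p: "p = (\<lfloor>x / \<delta>\<rfloor>, \<lfloor>u x / \<delta>\<rfloor>)"
    using meeting_boxes_eq_image[OF assms(1)] by blast
  have "(\<lfloor>x / \<delta>\<rfloor>, \<lfloor>v x / \<delta>\<rfloor>) \<in> meeting_boxes \<delta> X v"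
    using meeting_boxes_eq_image[OF assms(1)] x by blast
  moreover have "p \<in> (\<lambda>d. (\<lfloor>x / \<delta>\<rfloor>, \<lfloor>v x / \<delta>\<rfloor> + d)) ` D \<lfloor>x / \<delta>\<rfloor>"
    using assms(2)[OF x] p by (auto intro: image_eqI[where x = "\<lfloor>u x / \<delta>\<rfloor> - \<lfloor>v x / \<delta>\<rfloor>"])
  ultimately show "p \<in> (\<Union>(i, j) \<in> meeting_boxes \<delta> X v. (\<lambda>d. (i, j + d)) ` D i)"
    by blast
qed

lemma meeting_boxes_card_le_shifts:
  assumes "\<delta> > 0" and "\<And>x. x \<in> X \<Longrightarrow> \<lfloor>u x / \<delta>\<rfloor> - \<lfloor>v x / \<delta>\<rfloor> \<in> D \<lfloor>x / \<delta>\<rfloor>"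
    and "finite (meeting_boxes \<delta> X v)" and "\<And>i. finite (D i)" and "\<And>i. card (D i) \<le> k"
  shows "finite (meeting_boxes \<delta> X u)"
    and "card (meeting_boxes \<delta> X u) \<le> k * card (meeting_boxes \<delta> X v)"
proof -
  let ?V = "meeting_boxes \<delta> X v"
  let ?shifts = "\<lambda>(i, j). (\<lambda>d. (i, j + d)) ` D i"
  have cover: "meeting_boxes \<delta> X u \<subseteq> (\<Union>p \<in> ?V. ?shifts p)"
    using assms(1,2) by (rule meeting_boxes_subset_shifts)
  have finite_shifts: "finite (?shifts p)" for p
    using assms(4) by (cases p) simp
  have card_shifts: "card (?shifts p) \<le> k" for p
    by (cases p) (simp only: prod.case, rule le_trans[OF card_image_le[OF assms(4)] assms(5)])
  show "finite (meeting_boxes \<delta> X u)"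
    using cover assms(3) finite_shifts by (meson finite_UN_I finite_subset)
  have "card (meeting_boxes \<delta> X u) \<le> card (\<Union>p \<in> ?V. ?shifts p)"
    using cover assms(3) finite_shifts by (intro card_mono) auto
  also have "\<dots> \<le> (\<Sum>p \<in> ?V. card (?shifts p))"
    by (rule card_UN_le[OF assms(3)])
  also have "\<dots> \<le> (\<Sum>p \<in> ?V. k)"
    by (rule sum_mono) (rule card_shifts)
  finally show "card (meeting_boxes \<delta> X u) \<le> k * card ?V"
    by (simp add: mult.commute)
qed

lemma meeting_boxes_card_le_shifts_converse:
  assumes "\<delta> > 0" and "\<And>x. x \<in> X \<Longrightarrow> \<lfloor>u x / \<delta>\<rfloor> - \<lfloor>v x / \<delta>\<rfloor> \<in> D \<lfloor>x / \<delta>\<rfloor>"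
    and "finite (meeting_boxes \<delta> X u)" and "\<And>i. finite (D i)" and "\<And>i. card (D i) \<le> k"
  shows "card (meeting_boxes \<delta> X v) \<le> k * card (meeting_boxes \<delta> X u)"
proof (rule meeting_boxes_card_le_shifts(2)[of \<delta> X v u "\<lambda>i. uminus ` D i", OF assms(1) _ assms(3)])
  show "\<lfloor>v x / \<delta>\<rfloor> - \<lfloor>u x / \<delta>\<rfloor> \<in> uminus ` D \<lfloor>x / \<delta>\<rfloor>" if "x \<in> X" for x
    using assms(2)[OF that] by (auto intro: image_eqI[where x = "\<lfloor>u x / \<delta>\<rfloor> - \<lfloor>v x / \<delta>\<rfloor>"])
  show "finite (uminus ` D i)" for i
    using assms(4) by simp
  show "card (uminus ` D i) \<le> k" for i
    by (rule le_trans[OF card_image_le[OF assms(4)] assms(5)])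
qed

lemma floor_add_divide_in_column:
  assumes "\<delta> > 0" and "x \<in> X"
  shows "\<lfloor>(f x + g x) / \<delta>\<rfloor> - \<lfloor>g x / \<delta>\<rfloor> \<in> (\<lambda>(k, e). k + e) ` (column_meeting \<delta> X f \<lfloor>x / \<delta>\<rfloor> \<times> {0, 1})"
proof -
  have "\<lfloor>f x / \<delta>\<rfloor> \<in> column_meeting \<delta> X f \<lfloor>x / \<delta>\<rfloor>"
    using assms column_meeting_eq_image[OF assms(1)] by blast
  then show ?thesis
    using floor_add_divide[of "f x" "g x" \<delta>] by force
qed

lemma card_plus_zero_one_le:
  assumes "finite (A :: int set)"
  shows "card ((\<lambda>(k, e). k + e) ` (A \<times> {0, 1})) \<le> 2 * card A"
proof -
  have "card {0, 1 :: int} = 2" by simp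
  then show ?thesis
    using card_image_le[of "A \<times> {0, 1}" "\<lambda>(k, e). k + e"] assms
    by (simp add: card_cartesian_product)
qed

lemma of_nat_divide_le_of_le_mult:
  fixes a b c :: nat
  assumes "a \<le> b * c"
  shows "real a / real c \<le> real b"
proof (cases "c = 0")
  case False
  have "real a \<le> real b * real c"
    using of_nat_mono[OF assms, where 'a = real] by simp
  with False show ?thesis by (simp add: pos_divide_le_eq)
qed simp

theorem lemma3:
  fixes X :: "real set" and \<delta> :: real and f g :: "real \<Rightarrow> real" and n_f :: nat
  assumes "\<delta> > 0"
    and "\<forall>x\<in>X. f x > 0" and "\<forall>x\<in>X. g x > 0"
    and "finite (meeting_boxes \<delta> X g)"
    and "\<forall>i. finite (column_meeting \<delta> X f i) \<and> card (column_meeting \<delta> X f i) \<le> n_f"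
  shows "real (N_delta \<delta> X (\<lambda>x. f x + g x)) \<ge> real (N_delta \<delta> X g) / (2 * real n_f)"
proof -
  let ?rises = "\<lambda>i. (\<lambda>(k, e). k + e) ` (column_meeting \<delta> X f i \<times> {0, 1 :: int})"
  have finite_column: "finite (column_meeting \<delta> X f i)" for i
    using assms(5) by blast
  have finite_rises: "finite (?rises i)" for i
    using finite_column by simp
  have card_rises: "card (?rises i) \<le> 2 * n_f" for i
    using assms(5) by (intro le_trans[OF card_plus_zero_one_le[OF finite_column]]) simp
  note rise = floor_add_divide_in_column[OF assms(1), of _ X f g]
  have finite_sum: "finite (meeting_boxes \<delta> X (\<lambda>x. f x + g x))"
    by (rule meeting_boxes_card_le_shifts(1)[OF assms(1) rise assms(4) finite_rises card_rises])
  have "N_delta \<delta> X g \<le> 2 * n_f * N_delta \<delta> X (\<lambda>x. f x + g x)"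
    unfolding N_delta_def
    by (rule meeting_boxes_card_le_shifts_converse[of \<delta> X "\<lambda>x. f x + g x" g ?rises,
          OF assms(1) rise finite_sum finite_rises card_rises])
  then show ?thesis
    using of_nat_divide_le_of_le_mult[of _ _ "2 * n_f"] by (simp add: mult.commute)
qed

end
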